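(* Let $f(z)=z+\sum_{n=2}^{\infty}a_nz^n\in\mathcal{S}^{*}_{\rho}$. Then $$|H_{2,2}(f)|=|a_2a_4-a_3^2|\le \tfrac14 .$$ The bound is sharp, with equality for $f(z)=z\exp\Big(\int_0^z\frac{\sinh^{-1}(t^{2})}{t}\,dt\Big)=z+\frac{z^3}{2}+\frac{z^5}{8}-\cdots$.
   Context: Let $\mathbb{D}=\{z\in\mathbb{C}:|z|<1\}$. For analytic $g_1,g_2$ on $\mathbb{D}$, $g_1\prec g_2$ means there is an analytic $w:\mathbb{D}\to\mathbb{D}$ with $w(0)=0$ such that $g_1=g_2\circ w$. Here $\sinh^{-1}$ denotes the principal branch of the inverse hyperbolic sine with $\sinh^{-1}(0)=0$, analytic on $\mathbb{D}$. The class $\mathcal{S}^{*}_{\rho}$ consists of all univalent analytic functions $f$ on $\mathbb{D}$ with $f(z)=z+\sum_{n\ge2}a_nz^n$ such that $\frac{zf'(z)}{f(z)}\prec 1+\sinh^{-1}(z)$. *)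

theory Defs
  imports "HOL-Complex_Analysis.Complex_Analysis"
begin

definition subordinate :: "(complex \<Rightarrow> complex) \<Rightarrow> (complex \<Rightarrow> complex) \<Rightarrow> bool" where
  "subordinate g1 g2 \<longleftrightarrow>
     (\<exists>w. w holomorphic_on ball 0 1 \<and> w ` ball 0 1 \<subseteq> ball 0 1 \<and> w 0 = 0 \<and>
          (\<forall>z\<in>ball 0 1. g1 z = g2 (w z)))"

definition coeff :: "(complex \<Rightarrow> complex) \<Rightarrow> nat \<Rightarrow> complex" where
  "coeff f n = (deriv ^^ n) f 0 / of_nat (fact n)"

text \<open>z f'(z)/f(z), extended by its limit value 1 at z = 0 (for normalized f).\<close>
definition logderiv_quot :: "(complex \<Rightarrow> complex) \<Rightarrow> complex \<Rightarrow> complex" where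
  "logderiv_quot f z = (if z = 0 then 1 else z * deriv f z / f z)"

text \<open>The class S*_rho; arsinh on complex is the principal branch
  ln (z + (z^2+1) powr (1/2)) with principal ln and powr.\<close>
definition S_rho :: "(complex \<Rightarrow> complex) set" where
  "S_rho = {f. f holomorphic_on ball 0 1 \<and> inj_on f (ball 0 1) \<and> f 0 = 0 \<and> deriv f 0 = 1 \<and>
              subordinate (logderiv_quot f) (\<lambda>z. 1 + arsinh z)}"

end

theory Submission
  imports Defs
begin

text \<open>Write \<open>z f'/f = 1 + arsinh w\<close> with a Schwarz function \<open>w = c\<^sub>1 z + c\<^sub>2 z\<^sup>2 + c\<^sub>3 z\<^sup>3 + \<dots>\<close>.
  Comparing Taylor coefficients gives \<open>a\<^sub>2 = c\<^sub>1\<close>, \<open>a\<^sub>3 = (c\<^sub>1\<^sup>2 + c\<^sub>2)/2\<close>,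
  \<open>a\<^sub>4 = c\<^sub>1\<^sup>3/9 + c\<^sub>1 c\<^sub>2/2 + c\<^sub>3/3\<close>, hence \<open>a\<^sub>2 a\<^sub>4 - a\<^sub>3\<^sup>2 = c\<^sub>1 c\<^sub>3/3 - 5 c\<^sub>1\<^sup>4/36 - c\<^sub>2\<^sup>2/4\<close>.
  Applying the Schwarz--Pick lemma to \<open>w/z\<close> and once more after a disc automorphism yields
  \<open>\<bar>c\<^sub>2\<bar> \<le> 1 - \<bar>c\<^sub>1\<bar>\<^sup>2\<close> and \<open>\<bar>c\<^sub>3\<bar> \<le> 1 - \<bar>c\<^sub>1\<bar>\<^sup>2 - \<bar>c\<^sub>2\<bar>\<^sup>2/(1 + \<bar>c\<^sub>1\<bar>)\<close>, and the bound \<open>1/4\<close>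
  reduces to a real polynomial inequality. Equality holds for \<open>w = z\<^sup>2\<close>; the corresponding
  function is univalent because \<open>s \<mapsto> log f (e\<^sup>s)\<close> has derivative \<open>1 + arsinh (e\<^sup>2\<^sup>s)\<close> of positive
  real part on the convex half-plane \<open>Re s < 0\<close>.\<close>

lemma arsinh_complex_eq_Ln: "arsinh z = Ln (z + csqrt (z^2 + 1))"
proof (cases "z^2 + 1 = 0")
  case True
  then show ?thesis by (simp add: arsinh_def)
next
  case False
  then show ?thesis by (simp add: arsinh_def powr_def csqrt_exp_Ln)
qed

lemma arsinh_complex_arg_nonzero: "z + csqrt (z^2 + 1) \<noteq> 0"
proof
  assume "z + csqrt (z^2 + 1) = 0"
  then have "csqrt (z^2 + 1) = - z" by (simp add: add_eq_0_iff)
  then have "(csqrt (z^2 + 1))^2 = z^2" by simp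
  then show False by simp
qed

lemma exp_arsinh_complex: "exp (arsinh z) = z + csqrt (z^2 + 1)"
  using arsinh_complex_arg_nonzero by (simp add: arsinh_complex_eq_Ln)

lemma exp_arsinh_complex_quadratic:
  fixes z :: complex
  shows "(exp (arsinh z))^2 = 2 * z * exp (arsinh z) + 1"
  using power2_csqrt[of "z^2 + 1"] unfolding exp_arsinh_complex by (simp add: algebra_simps power2_eq_square)

lemma Re_one_plus_power2_pos:
  fixes z :: complex assumes "norm z < 1" shows "0 < Re (1 + z^2)"
proof -
  have "(Re z)^2 + (Im z)^2 < 1" using assms by (simp add: cmod_def power2_eq_square)
  then show ?thesis by (simp add: power2_eq_square) (smt (verit) zero_le_square)
qed

text \<open>With \<open>y = z + \<surd>(z\<^sup>2+1)\<close> one has \<open>2\<surd>(z\<^sup>2+1) = y + 1/y\<close>, and \<open>Re (1/y)\<close> has the sign of \<open>Re y\<close>.\<close>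
lemma Re_arsinh_complex_arg_pos:
  fixes z :: complex assumes "norm z < 1" shows "0 < Re (z + csqrt (z^2 + 1))"
proof -
  define s where "s = csqrt (z^2 + 1)"
  define y where "y = z + s"
  have "y \<noteq> 0" using arsinh_complex_arg_nonzero by (simp add: y_def s_def)
  have "0 < Re s"
  proof (rule ccontr)
    assume "\<not> 0 < Re s"
    then have "Re s = 0" using Re_csqrt[of "z^2 + 1"] by (simp add: s_def)
    then have "Re (s^2) \<le> 0" by (simp add: power2_eq_square)
    then show False using Re_one_plus_power2_pos[OF assms] by (simp add: s_def add.commute)
  qed
  have "2 * s = y + inverse y"
  proof -
    have "(s - z) * y = 1"
      using power2_csqrt[of "z^2 + 1"] unfolding y_def s_def by (simp add: algebra_simps power2_eq_square)
    then have "inverse y = s - z" using \<open>y \<noteq> 0\<close> by (simp add: field_simps)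
    then show ?thesis by (simp add: y_def)
  qed
  then have "2 * Re s = Re y + Re (inverse y)"
    by (metis Re_complex_of_real mult_2 of_real_numeral plus_complex.sel times_complex.sel)
  then have "2 * Re s = Re y * (1 + 1 / (norm y)^2)"
    by (simp add: Re_inverse cmod_power2 algebra_simps)
  moreover have "0 < 1 + 1 / (norm y)^2" by (simp add: add_pos_nonneg)
  ultimately have "0 < Re y" using \<open>0 < Re s\<close> by (smt (verit) zero_less_mult_iff)
  then show ?thesis by (simp only: y_def s_def)
qed

lemma holomorphic_on_arsinh_unit_disc: "(arsinh :: complex \<Rightarrow> complex) holomorphic_on ball 0 1"
proof -
  have nonpos: "w \<notin> \<real>\<^sub>\<le>\<^sub>0" if "0 < Re w" for w :: complex
    using that by (simp add: complex_nonpos_Reals_iff)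
  have "(\<lambda>z. Ln (z + csqrt (z^2 + 1))) holomorphic_on ball 0 1"
  proof (intro holomorphic_intros)
    fix z :: complex assume "z \<in> ball 0 1"
    then have "norm z < 1" by simp
    show "z^2 + 1 \<notin> \<real>\<^sub>\<le>\<^sub>0"
      using Re_one_plus_power2_pos[OF \<open>norm z < 1\<close>] by (intro nonpos) (simp add: add.commute)
    show "z + csqrt (z^2 + 1) \<notin> \<real>\<^sub>\<le>\<^sub>0"
      using Re_arsinh_complex_arg_pos[OF \<open>norm z < 1\<close>] by (rule nonpos)
  qed
  then show ?thesis by (simp add: arsinh_complex_eq_Ln[abs_def])
qed

text \<open>Since \<open>Re (arsinh z) = ln \<bar>y\<bar>\<close> for \<open>y = exp (arsinh z)\<close>, it suffices that
  \<open>\<bar>y\<bar> > 2/5 > 1/e\<close>, which follows from \<open>y\<^sup>2 - 1 = 2zy\<close>.\<close>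
lemma Re_one_plus_arsinh_pos:
  fixes z :: complex assumes "norm z < 1" shows "0 < Re (1 + arsinh z)"
proof -
  define y where "y = exp (arsinh z)"
  have "y \<noteq> 0" by (simp add: y_def)
  have "y * y - 1 = 2 * z * y" using exp_arsinh_complex_quadratic[of z] by (simp add: y_def power2_eq_square)
  then have "norm (y * y - 1) = 2 * norm z * norm y" by (simp add: norm_mult)
  also have "\<dots> < 2 * norm y" using assms \<open>y \<noteq> 0\<close> by simp
  finally have "1 - norm y * norm y < 2 * norm y"
    using norm_triangle_ineq2[of 1 "y * y"] by (simp add: norm_mult norm_minus_commute)
  then have "2/5 < norm y"
    using mult_mono[of "norm y" "2/5" "norm y" "2/5"] by fastforce
  moreover have "exp (-1::real) \<le> 2/5"
    using exp_lower_Taylor_quadratic[of 1] by (simp add: exp_minus field_simps)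
  moreover have "norm y = exp (Re (arsinh z))" by (simp add: y_def)
  ultimately have "exp (-1) < exp (Re (arsinh z))" by linarith
  then show ?thesis by simp
qed

lemma holomorphic_on_arsinh_comp:
  fixes w :: "complex \<Rightarrow> complex"
  assumes w: "w holomorphic_on ball 0 1" and w_disc: "\<And>z. norm z < 1 \<Longrightarrow> norm (w z) < 1"
  shows "(\<lambda>z. arsinh (w z)) holomorphic_on ball 0 1"
  using holomorphic_on_compose_gen[OF w holomorphic_on_arsinh_unit_disc] w_disc
  by (force simp: o_def)

lemma coeff_0: "coeff f 0 = f 0"
  by (simp add: coeff_def)

lemma coeff_eq_fps_nth: "f has_fps_expansion F \<Longrightarrow> coeff f n = F $ n"
  by (simp add: coeff_def fps_nth_fps_expansion)

lemma has_fps_expansion_unit_disc: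
  "f holomorphic_on ball 0 1 \<Longrightarrow> f has_fps_expansion fps_expansion f 0"
  by (rule has_fps_expansion_fps_expansion) auto

lemma has_fps_expansion_cong_unit_disc:
  fixes f g :: "complex \<Rightarrow> complex"
  assumes "f has_fps_expansion F" "\<And>z. norm z < 1 \<Longrightarrow> f z = g z"
  shows "g has_fps_expansion F"
proof -
  have "eventually (\<lambda>z::complex. z \<in> ball 0 1) (nhds 0)"
    by (rule eventually_nhds_in_open) auto
  then have "eventually (\<lambda>z. f z = g z) (nhds 0)"
    by eventually_elim (simp add: assms(2))
  then show ?thesis using assms(1) has_fps_expansion_cong by blast
qed

lemma fps_expansion_eq_unit_disc:
  fixes f g :: "complex \<Rightarrow> complex"
  assumes "f has_fps_expansion F" "g has_fps_expansion G" "\<And>z. norm z < 1 \<Longrightarrow> f z = g z"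
  shows "F = G"
  using has_fps_expansion_cong_unit_disc[OF assms(1,3)] assms(2) by (rule fps_expansion_unique_complex)

lemma fps_mult_nth_small:
  fixes f g :: "'a::comm_semiring_1 fps"
  shows "(f * g) $ 1 = f $ 0 * g $ 1 + f $ 1 * g $ 0"
    "(f * g) $ 2 = f $ 0 * g $ 2 + f $ 1 * g $ 1 + f $ 2 * g $ 0"
    "(f * g) $ 3 = f $ 0 * g $ 3 + f $ 1 * g $ 2 + f $ 2 * g $ 1 + f $ 3 * g $ 0"
    "(f * g) $ 4 = f $ 0 * g $ 4 + f $ 1 * g $ 3 + f $ 2 * g $ 2 + f $ 3 * g $ 1 + f $ 4 * g $ 0"
  by (simp_all add: fps_mult_nth eval_nat_numeral sum.atLeast0_atMost_Suc)

lemma coeffs_of_logderiv_eq: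
  fixes f h :: "complex \<Rightarrow> complex"
  assumes f: "f holomorphic_on ball 0 1" and h: "h holomorphic_on ball 0 1"
    and "f 0 = 0" "deriv f 0 = 1" "h 0 = 0"
    and eq: "\<And>z. norm z < 1 \<Longrightarrow> z * deriv f z = f z * (1 + h z)"
  shows "coeff f 2 = coeff h 1"
    and "coeff f 3 = ((coeff h 1)^2 + coeff h 2) / 2"
    and "coeff f 4 = (coeff h 1)^3 / 6 + coeff h 1 * coeff h 2 / 2 + coeff h 3 / 3"
proof -
  define F where "F = fps_expansion f 0"
  define H where "H = fps_expansion h 0"
  have hF: "f has_fps_expansion F" unfolding F_def using f by (rule has_fps_expansion_unit_disc)
  have hH: "h has_fps_expansion H" unfolding H_def using h by (rule has_fps_expansion_unit_disc)
  have "fps_X * fps_deriv F = F * (1 + H)"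
  proof (rule fps_expansion_eq_unit_disc)
    show "(\<lambda>z. z * deriv f z) has_fps_expansion fps_X * fps_deriv F"
      by (intro fps_expansion_intros hF)
    show "(\<lambda>z. f z * (1 + h z)) has_fps_expansion F * (1 + H)"
      by (intro fps_expansion_intros hF hH)
  qed (fact eq)
  then have n: "(fps_X * fps_deriv F) $ n = (F * (1 + H)) $ n" for n by simp
  have [simp]: "F $ 0 = 0" "F $ 1 = 1" "H $ 0 = 0"
    using assms fps_nth_fps_expansion[OF hF, of 0] fps_nth_fps_expansion[OF hF, of 1]
      fps_nth_fps_expansion[OF hH, of 0] by simp_all
  have F2: "F $ 2 = H $ 1" using n[of 2] by (simp add: fps_mult_nth_small Suc_1 flip: One_nat_def)
  have F3: "F $ 3 = ((H $ 1)^2 + H $ 2) / 2"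
    using n[of 3]
    by (simp add: fps_mult_nth_small Suc_1 F2 power2_eq_square field_simps flip: One_nat_def)
  have F4: "F $ 4 = (H $ 1)^3 / 6 + H $ 1 * H $ 2 / 2 + H $ 3 / 3"
    using n[of 4]
    by (simp add: fps_mult_nth_small Suc_1 F2 F3 power2_eq_square power3_eq_cube field_simps
        flip: One_nat_def)
  note coeffs = coeff_eq_fps_nth[OF hF] coeff_eq_fps_nth[OF hH]
  show "coeff f 2 = coeff h 1" using F2 by (simp only: coeffs)
  show "coeff f 3 = ((coeff h 1)^2 + coeff h 2) / 2" using F3 by (simp only: coeffs)
  show "coeff f 4 = (coeff h 1)^3 / 6 + coeff h 1 * coeff h 2 / 2 + coeff h 3 / 3"
    using F4 by (simp only: coeffs)
qed

text \<open>The hypotheses say \<open>E = exp H\<close> and \<open>E = W + \<surd>(1 + W\<^sup>2)\<close>, i.e. \<open>H = arsinh W\<close>.\<close>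
lemma fps_arsinh_coeffs:
  fixes W H E :: "'a::field_char_0 fps"
  assumes quadratic: "E * E - 2 * (W * E) - 1 = 0" and exp: "fps_deriv E = fps_deriv H * E"
    and [simp]: "W $ 0 = 0" "H $ 0 = 0" "E $ 0 = 1"
  shows "H $ 1 = W $ 1" "H $ 2 = W $ 2" "H $ 3 = W $ 3 - (W $ 1)^3 / 6"
proof -
  have quad: "(E * E) $ n = 2 * (W * E) $ n" if "n > 0" for n
  proof -
    have "(E * E - 2 * (W * E) - 1) $ n = 0" by (simp only: quadratic fps_zero_nth)
    then show ?thesis using that by (simp add: fps_numeral_nth)
  qed
  have deriv: "(fps_deriv E) $ n = (fps_deriv H * E) $ n" for n using exp by simp
  note nth_simps = fps_mult_nth_small Suc_1 power2_eq_square power3_eq_cube field_simps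
  have E1: "E $ 1 = W $ 1" using quad[of 1] by (simp add: nth_simps flip: One_nat_def)
  have E2: "E $ 2 = (W $ 1)^2 / 2 + W $ 2"
    using quad[of 2] by (simp add: nth_simps E1 flip: One_nat_def)
  have E3: "E $ 3 = W $ 1 * W $ 2 + W $ 3"
    using quad[of 3] by (simp add: nth_simps E1 E2 flip: One_nat_def) algebra
  show H1: "H $ 1 = W $ 1" using deriv[of 0] by (simp add: nth_simps E1 flip: One_nat_def)
  show H2: "H $ 2 = W $ 2" using deriv[of 1] by (simp add: nth_simps E1 E2 H1 flip: One_nat_def)
  show "H $ 3 = W $ 3 - (W $ 1)^3 / 6"
    using deriv[of 2] by (simp add: nth_simps E1 E2 E3 H1 H2 flip: One_nat_def)
qed

lemma coeffs_arsinh_comp: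
  fixes w :: "complex \<Rightarrow> complex"
  assumes w: "w holomorphic_on ball 0 1" and w_disc: "\<And>z. norm z < 1 \<Longrightarrow> norm (w z) < 1"
    and "w 0 = 0"
  shows "coeff (\<lambda>z. arsinh (w z)) 1 = coeff w 1"
    and "coeff (\<lambda>z. arsinh (w z)) 2 = coeff w 2"
    and "coeff (\<lambda>z. arsinh (w z)) 3 = coeff w 3 - (coeff w 1)^3 / 6"
proof -
  define h where "h z = arsinh (w z)" for z
  define e where "e z = exp (h z)" for z
  have h: "h holomorphic_on ball 0 1"
    unfolding h_def using w w_disc by (rule holomorphic_on_arsinh_comp)
  have e: "e holomorphic_on ball 0 1" unfolding e_def by (intro holomorphic_intros h)
  define W where "W = fps_expansion w 0"
  define H where "H = fps_expansion h 0"
  define E where "E = fps_expansion e 0"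
  have hW: "w has_fps_expansion W" unfolding W_def using w by (rule has_fps_expansion_unit_disc)
  have hH: "h has_fps_expansion H" unfolding H_def using h by (rule has_fps_expansion_unit_disc)
  have hE: "e has_fps_expansion E" unfolding E_def using e by (rule has_fps_expansion_unit_disc)
  have quadratic: "E * E - 2 * (W * E) - 1 = 0"
  proof (rule fps_expansion_eq_unit_disc)
    show "(\<lambda>z. e z * e z - 2 * (w z * e z) - 1) has_fps_expansion E * E - 2 * (W * E) - 1"
      by (intro fps_expansion_intros hE hW)
    show "(\<lambda>z. 0) has_fps_expansion 0" by simp
    fix z :: complex
    show "e z * e z - 2 * (w z * e z) - 1 = 0"
      using exp_arsinh_complex_quadratic[of "w z"] by (simp add: e_def h_def power2_eq_square)
  qed
  moreover have "fps_deriv E = fps_deriv H * E"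
  proof (rule fps_expansion_eq_unit_disc)
    show "deriv e has_fps_expansion fps_deriv E" by (intro fps_expansion_intros hE)
    show "(\<lambda>z. deriv h z * e z) has_fps_expansion fps_deriv H * E"
      by (intro fps_expansion_intros hE hH)
    fix z :: complex assume "norm z < 1"
    then have "(h has_field_derivative deriv h z) (at z)"
      using h by (intro holomorphic_derivI[of _ "ball 0 1"]) auto
    then have "(e has_field_derivative exp (h z) * deriv h z) (at z)"
      unfolding e_def[abs_def] by (auto intro!: derivative_eq_intros)
    then show "deriv e z = deriv h z * e z" by (simp add: DERIV_imp_deriv e_def)
  qed
  moreover have "W $ 0 = 0" "H $ 0 = 0" "E $ 0 = 1"
    using assms fps_nth_fps_expansion[OF hW, of 0] fps_nth_fps_expansion[OF hH, of 0]
      fps_nth_fps_expansion[OF hE, of 0] by (simp_all add: h_def e_def)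
  ultimately have H1: "H $ 1 = W $ 1" and H2: "H $ 2 = W $ 2"
    and H3: "H $ 3 = W $ 3 - (W $ 1)^3 / 6"
    by (rule fps_arsinh_coeffs)+
  note coeffs = coeff_eq_fps_nth[OF hW] coeff_eq_fps_nth[OF hH, unfolded h_def]
  show "coeff (\<lambda>z. arsinh (w z)) 1 = coeff w 1" using H1 by (simp only: coeffs)
  show "coeff (\<lambda>z. arsinh (w z)) 2 = coeff w 2" using H2 by (simp only: coeffs)
  show "coeff (\<lambda>z. arsinh (w z)) 3 = coeff w 3 - (coeff w 1)^3 / 6" using H3 by (simp only: coeffs)
qed

lemma unit_disc_self_map_cases:
  fixes u :: "complex \<Rightarrow> complex"
  assumes u: "u holomorphic_on ball 0 1" and u_disc: "\<And>z. norm z < 1 \<Longrightarrow> norm (u z) \<le> 1"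
  shows "(\<forall>z. norm z < 1 \<longrightarrow> u z = u 0) \<or> (\<forall>z. norm z < 1 \<longrightarrow> norm (u z) < 1)"
proof (cases "\<exists>z. norm z < 1 \<and> norm (u z) = 1")
  case True
  then obtain z0 where z0: "norm z0 < 1" "norm (u z0) = 1" by blast
  have "u constant_on ball 0 1"
    by (rule maximum_modulus_principle[OF u open_ball connected_ball open_ball subset_refl, of z0])
      (use z0 u_disc in auto)
  then have "u z = u 0" if "norm z < 1" for z
    using that by (auto simp: constant_on_def)
  then show ?thesis by blast
next
  case False
  then show ?thesis using u_disc by (meson order.not_eq_order_implies_strict)
qed

lemma coeff_eq_0_if_constant_on_unit_disc:
  fixes u :: "complex \<Rightarrow> complex"
  assumes "\<And>z. norm z < 1 \<Longrightarrow> u z = c" and "n > 0"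
  shows "coeff u n = 0"
proof -
  have "u has_fps_expansion fps_const c"
    using has_fps_expansion_cong_unit_disc[OF has_fps_expansion_const] assms(1) by metis
  then show ?thesis using \<open>n > 0\<close> by (simp add: coeff_eq_fps_nth)
qed

lemma schwarz_factor:
  fixes g :: "complex \<Rightarrow> complex"
  assumes g: "g holomorphic_on ball 0 1" and "g 0 = 0"
    and g_disc: "\<And>z. norm z < 1 \<Longrightarrow> norm (g z) < 1"
  obtains t where "t holomorphic_on ball 0 1" "\<And>z. norm z < 1 \<Longrightarrow> g z = z * t z"
    "\<And>z. norm z < 1 \<Longrightarrow> norm (t z) \<le> 1"
proof -
  obtain t where t: "t holomorphic_on ball 0 1" and gt: "\<And>z. norm z < 1 \<Longrightarrow> g z = z * t z"
    and "deriv g 0 = t 0"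
    using Schwarz3[OF g \<open>g 0 = 0\<close>] by blast
  have "norm (t z) \<le> 1" if z: "norm z < 1" for z
  proof (cases "z = 0")
    case True
    then show ?thesis
      using Schwarz_Lemma(2)[OF g \<open>g 0 = 0\<close> g_disc, of 0] \<open>deriv g 0 = t 0\<close> by simp
  next
    case False
    have "norm z * norm (t z) \<le> norm z * 1"
      using Schwarz_Lemma(1)[OF g \<open>g 0 = 0\<close> g_disc z] gt[OF z] by (simp add: norm_mult)
    then show ?thesis using False by simp
  qed
  then show ?thesis using that t gt by blast
qed

lemma coeff_Suc_of_eq_mult_z:
  fixes g t :: "complex \<Rightarrow> complex"
  assumes g: "g holomorphic_on ball 0 1" and t: "t holomorphic_on ball 0 1"
    and gt: "\<And>z. norm z < 1 \<Longrightarrow> g z = z * t z"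
  shows "coeff g (Suc n) = coeff t n"
proof -
  have hg: "g has_fps_expansion fps_expansion g 0" using g by (rule has_fps_expansion_unit_disc)
  have ht: "t has_fps_expansion fps_expansion t 0" using t by (rule has_fps_expansion_unit_disc)
  have "fps_expansion g 0 = fps_X * fps_expansion t 0"
  proof (rule fps_expansion_eq_unit_disc[OF hg])
    show "(\<lambda>z. z * t z) has_fps_expansion fps_X * fps_expansion t 0"
      by (intro fps_expansion_intros ht)
  qed (fact gt)
  then show ?thesis by (simp add: coeff_eq_fps_nth[OF hg] coeff_eq_fps_nth[OF ht])
qed

lemma Moebius_function_comp_self_map:
  fixes u :: "complex \<Rightarrow> complex"
  assumes u: "u holomorphic_on ball 0 1" and u_disc: "\<And>z. norm z < 1 \<Longrightarrow> norm (u z) < 1"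
  shows "(\<lambda>z. Moebius_function 0 (u 0) (u z)) holomorphic_on ball 0 1"
    and "\<And>z. norm z < 1 \<Longrightarrow> norm (Moebius_function 0 (u 0) (u z)) < 1"
proof -
  have "norm (u 0) < 1" using u_disc[of 0] by simp
  show "(\<lambda>z. Moebius_function 0 (u 0) (u z)) holomorphic_on ball 0 1"
    using holomorphic_on_compose_gen[OF u Moebius_function_holomorphic[OF \<open>norm (u 0) < 1\<close>, of 0]]
      u_disc by (force simp: o_def)
  show "norm (Moebius_function 0 (u 0) (u z)) < 1" if "norm z < 1" for z
    using Moebius_function_norm_lt_1[OF \<open>norm (u 0) < 1\<close> u_disc[OF that]] .
qed

text \<open>Here \<open>t\<close> is \<open>\<phi> \<circ> u\<close> divided by \<open>z\<close>, where \<open>\<phi> w = (w - a) / (1 - cnj a w)\<close> and \<open>a = u 0\<close>;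
  the coefficients are compared in \<open>z t (1 - cnj a u) = u - a\<close>.\<close>
lemma moebius_factor_coeffs:
  fixes u :: "complex \<Rightarrow> complex"
  assumes u: "u holomorphic_on ball 0 1" and u_disc: "\<And>z. norm z < 1 \<Longrightarrow> norm (u z) < 1"
  obtains t where "t holomorphic_on ball 0 1" "\<And>z. norm z < 1 \<Longrightarrow> norm (t z) \<le> 1"
    "coeff u 1 = of_real (1 - (norm (u 0))^2) * t 0"
    "coeff u 2 = of_real (1 - (norm (u 0))^2) * (coeff t 1 - cnj (u 0) * (t 0)^2)"
proof -
  define a where "a = u 0"
  have "norm a < 1" using u_disc[of 0] by (simp add: a_def)
  define v where "v z = Moebius_function 0 a (u z)" for z
  have den: "1 - cnj a * u z \<noteq> 0" if "norm z < 1" for z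
  proof -
    have "norm (cnj a * u z) < 1"
      using norm_mult_less[of "cnj a" 1 "u z" 1] \<open>norm a < 1\<close> u_disc[OF that] by simp
    then show ?thesis by auto
  qed
  have v: "v holomorphic_on ball 0 1"
    using Moebius_function_comp_self_map(1)[OF u u_disc] by (simp add: v_def[abs_def] a_def)
  have "v 0 = 0" by (simp add: v_def a_def Moebius_function_eq_zero)
  have v_disc: "norm (v z) < 1" if "norm z < 1" for z
    using Moebius_function_comp_self_map(2)[OF u u_disc that] by (simp add: v_def a_def)
  obtain t where t: "t holomorphic_on ball 0 1" and vt: "\<And>z. norm z < 1 \<Longrightarrow> v z = z * t z"
    and t_disc: "\<And>z. norm z < 1 \<Longrightarrow> norm (t z) \<le> 1"
    using schwarz_factor[OF v \<open>v 0 = 0\<close> v_disc] by blast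
  define U where "U = fps_expansion u 0"
  define T where "T = fps_expansion t 0"
  have hU: "u has_fps_expansion U" unfolding U_def using u by (rule has_fps_expansion_unit_disc)
  have hT: "t has_fps_expansion T" unfolding T_def using t by (rule has_fps_expansion_unit_disc)
  have "fps_X * T * (1 - fps_const (cnj a) * U) = U - fps_const a"
  proof (rule fps_expansion_eq_unit_disc)
    show "(\<lambda>z. z * t z * (1 - cnj a * u z)) has_fps_expansion fps_X * T * (1 - fps_const (cnj a) * U)"
      by (intro fps_expansion_intros hU hT)
    show "(\<lambda>z. u z - a) has_fps_expansion U - fps_const a"
      by (intro fps_expansion_intros hU)
    fix z :: complex assume "norm z < 1"
    then show "z * t z * (1 - cnj a * u z) = u z - a"
      using den vt[symmetric] by (simp add: v_def Moebius_function_simple)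
  qed
  then have n: "(fps_X * T * (1 - fps_const (cnj a) * U)) $ n = (U - fps_const a) $ n" for n
    by simp
  have [simp]: "U $ 0 = a" "T $ 0 = t 0"
    using fps_nth_fps_expansion[OF hU, of 0] fps_nth_fps_expansion[OF hT, of 0] by (simp_all add: a_def)
  have "cnj a * a = of_real ((norm a)^2)" using complex_norm_square[of a] by (simp add: mult.commute)
  then have D: "1 - cnj a * a = of_real (1 - (norm a)^2)" by simp
  have U1: "U $ 1 = (1 - cnj a * a) * t 0" using n[of 1] by (simp add: fps_mult_nth_small algebra_simps)
  have U2: "U $ 2 = (1 - cnj a * a) * (T $ 1 - cnj a * (t 0)^2)"
    using n[of 2] by (simp add: fps_mult_nth_small U1 algebra_simps power2_eq_square flip: One_nat_def)
  show ?thesis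
  proof (rule that[OF t t_disc])
    show "coeff u 1 = of_real (1 - (norm (u 0))^2) * t 0"
      using U1 D by (simp add: coeff_eq_fps_nth[OF hU] a_def)
    show "coeff u 2 = of_real (1 - (norm (u 0))^2) * (coeff t 1 - cnj (u 0) * (t 0)^2)"
      using U2 D by (simp add: coeff_eq_fps_nth[OF hU] coeff_eq_fps_nth[OF hT] a_def)
  qed
qed

lemma self_map_coeff1_bound:
  fixes u :: "complex \<Rightarrow> complex"
  assumes u: "u holomorphic_on ball 0 1" and u_disc: "\<And>z. norm z < 1 \<Longrightarrow> norm (u z) \<le> 1"
  shows "norm (coeff u 1) \<le> 1 - (norm (u 0))^2"
  using unit_disc_self_map_cases[OF u u_disc]
proof
  assume const: "\<forall>z. norm z < 1 \<longrightarrow> u z = u 0"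
  have "coeff u 1 = 0"
    by (rule coeff_eq_0_if_constant_on_unit_disc[of u "u 0"]) (use const in blast, simp)
  moreover have "(norm (u 0))^2 \<le> 1" using u_disc[of 0] by (simp add: power_le_one)
  ultimately show ?thesis by simp
next
  assume "\<forall>z. norm z < 1 \<longrightarrow> norm (u z) < 1"
  then obtain t where t_disc: "\<And>z::complex. norm z < 1 \<Longrightarrow> norm (t z) \<le> 1"
    and c1: "coeff u 1 = of_real (1 - (norm (u 0))^2) * t 0"
    using moebius_factor_coeffs[OF u] by blast
  have "0 \<le> 1 - (norm (u 0))^2" using u_disc[of 0] by (simp add: power_le_one)
  moreover have "norm (coeff u 1) = (1 - (norm (u 0))^2) * norm (t 0)"
    using \<open>0 \<le> 1 - (norm (u 0))^2\<close> by (simp only: c1 norm_mult norm_of_real abs_of_nonneg)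
  ultimately show ?thesis using mult_left_le[OF t_disc[of 0]] by simp
qed

lemma self_map_coeff2_bound:
  fixes u :: "complex \<Rightarrow> complex"
  assumes u: "u holomorphic_on ball 0 1" and u_disc: "\<And>z. norm z < 1 \<Longrightarrow> norm (u z) \<le> 1"
  shows "norm (coeff u 2) \<le> 1 - (norm (u 0))^2 - (norm (coeff u 1))^2 / (1 + norm (u 0))"
  using unit_disc_self_map_cases[OF u u_disc]
proof
  assume const: "\<forall>z. norm z < 1 \<longrightarrow> u z = u 0"
  have "coeff u 1 = 0" "coeff u 2 = 0"
    by (rule coeff_eq_0_if_constant_on_unit_disc[of u "u 0"]; (use const in blast)?; simp)+
  moreover have "(norm (u 0))^2 \<le> 1" using u_disc[of 0] by (simp add: power_le_one)
  ultimately show ?thesis by simp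
next
  assume "\<forall>z. norm z < 1 \<longrightarrow> norm (u z) < 1"
  then obtain t where t: "t holomorphic_on ball 0 1"
    and t_disc: "\<And>z::complex. norm z < 1 \<Longrightarrow> norm (t z) \<le> 1"
    and c1: "coeff u 1 = of_real (1 - (norm (u 0))^2) * t 0"
    and c2: "coeff u 2 = of_real (1 - (norm (u 0))^2) * (coeff t 1 - cnj (u 0) * (t 0)^2)"
    using moebius_factor_coeffs[OF u] by blast
  define x where "x = norm (u 0)"
  define r where "r = norm (t 0)"
  define D where "D = 1 - x^2"
  have "x < 1" using \<open>\<forall>z. norm z < 1 \<longrightarrow> norm (u z) < 1\<close> by (simp add: x_def)
  moreover have "0 \<le> x" by (simp add: x_def)
  ultimately have "0 < D" by (simp add: D_def abs_square_less_1)
  have "norm (coeff u 1) = D * r"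
    using \<open>0 < D\<close> unfolding c1 norm_mult norm_of_real by (simp add: D_def x_def r_def)
  have "norm (coeff t 1 - cnj (u 0) * (t 0)^2) \<le> norm (coeff t 1) + x * r^2"
    using norm_triangle_ineq4[of "coeff t 1" "cnj (u 0) * (t 0)^2"]
    by (simp add: norm_mult norm_power x_def r_def)
  also have "\<dots> \<le> 1 - r^2 + x * r^2"
    using self_map_coeff1_bound[OF t t_disc] by (simp add: r_def)
  finally have "D * norm (coeff t 1 - cnj (u 0) * (t 0)^2) \<le> D * (1 - r^2 + x * r^2)"
    using \<open>0 < D\<close> by simp
  moreover have "norm (coeff u 2) = D * norm (coeff t 1 - cnj (u 0) * (t 0)^2)"
    using \<open>0 < D\<close> unfolding c2 norm_mult norm_of_real by (simp add: D_def x_def)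
  ultimately have "norm (coeff u 2) \<le> D * (1 - r^2 + x * r^2)" by simp
  also have "D * (1 - r^2 + x * r^2) = D - (D * r)^2 / (1 + x)"
    using \<open>0 \<le> x\<close> by (simp add: D_def field_simps power2_eq_square)
  finally show ?thesis unfolding \<open>norm (coeff u 1) = D * r\<close> by (simp only: D_def x_def)
qed

lemma schwarz_function_coeff_bounds:
  fixes w :: "complex \<Rightarrow> complex"
  assumes w: "w holomorphic_on ball 0 1" and "w 0 = 0"
    and w_disc: "\<And>z. norm z < 1 \<Longrightarrow> norm (w z) < 1"
  shows "norm (coeff w 1) \<le> 1"
    and "norm (coeff w 2) \<le> 1 - (norm (coeff w 1))^2"
    and "norm (coeff w 3) \<le> 1 - (norm (coeff w 1))^2 - (norm (coeff w 2))^2 / (1 + norm (coeff w 1))"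
proof -
  obtain u where u: "u holomorphic_on ball 0 1" and wu: "\<And>z. norm z < 1 \<Longrightarrow> w z = z * u z"
    and u_disc: "\<And>z. norm z < 1 \<Longrightarrow> norm (u z) \<le> 1"
    using schwarz_factor[OF w \<open>w 0 = 0\<close> w_disc] by blast
  have shift: "coeff w (Suc n) = coeff u n" for n by (rule coeff_Suc_of_eq_mult_z[OF w u wu])
  have c1: "coeff w 1 = u 0" using shift[of 0] by (simp add: coeff_0)
  have c2: "coeff w 2 = coeff u 1" using shift[of 1] by (simp add: numeral_2_eq_2)
  have c3: "coeff w 3 = coeff u 2" using shift[of 2] by (simp add: numeral_3_eq_3 numeral_2_eq_2)
  show "norm (coeff w 1) \<le> 1" using u_disc[of 0] c1 by simp
  show "norm (coeff w 2) \<le> 1 - (norm (coeff w 1))^2"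
    unfolding c1 c2 by (rule self_map_coeff1_bound[OF u u_disc])
  show "norm (coeff w 3) \<le> 1 - (norm (coeff w 1))^2 - (norm (coeff w 2))^2 / (1 + norm (coeff w 1))"
    unfolding c1 c2 c3 by (rule self_map_coeff2_bound[OF u u_disc])
qed

lemma coeffs_of_logderiv_eq_arsinh:
  fixes f w :: "complex \<Rightarrow> complex"
  assumes f: "f holomorphic_on ball 0 1" and "f 0 = 0" "deriv f 0 = 1"
    and w: "w holomorphic_on ball 0 1" and w_disc: "\<And>z. norm z < 1 \<Longrightarrow> norm (w z) < 1"
    and "w 0 = 0"
    and eq: "\<And>z. norm z < 1 \<Longrightarrow> z * deriv f z = f z * (1 + arsinh (w z))"
  shows "coeff f 2 = coeff w 1"
    and "coeff f 3 = ((coeff w 1)^2 + coeff w 2) / 2"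
    and "coeff f 4 = (coeff w 1)^3 / 9 + coeff w 1 * coeff w 2 / 2 + coeff w 3 / 3"
proof -
  have h: "(\<lambda>z. arsinh (w z)) holomorphic_on ball 0 1"
    using w w_disc by (rule holomorphic_on_arsinh_comp)
  have "arsinh (w 0) = 0" by (simp add: \<open>w 0 = 0\<close>)
  note f_coeffs = coeffs_of_logderiv_eq[OF f h \<open>f 0 = 0\<close> \<open>deriv f 0 = 1\<close> this eq]
  note h_coeffs = coeffs_arsinh_comp[OF w w_disc \<open>w 0 = 0\<close>]
  show "coeff f 2 = coeff w 1" using f_coeffs(1) h_coeffs(1) by simp
  show "coeff f 3 = ((coeff w 1)^2 + coeff w 2) / 2" using f_coeffs(2) h_coeffs by simp
  show "coeff f 4 = (coeff w 1)^3 / 9 + coeff w 1 * coeff w 2 / 2 + coeff w 3 / 3"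
    using f_coeffs(3) h_coeffs by (simp add: field_simps) algebra
qed

lemma S_rho_schwarz_function:
  assumes "f \<in> S_rho"
  obtains w where "w holomorphic_on ball 0 1" "w 0 = 0" "\<And>z. norm z < 1 \<Longrightarrow> norm (w z) < 1"
    "\<And>z. norm z < 1 \<Longrightarrow> z * deriv f z = f z * (1 + arsinh (w z))"
proof -
  have inj: "inj_on f (ball 0 1)" and "f 0 = 0"
    and "subordinate (logderiv_quot f) (\<lambda>z. 1 + arsinh z)"
    using assms by (auto simp: S_rho_def)
  then obtain w where w: "w holomorphic_on ball 0 1" "w 0 = 0" and w_disc: "w ` ball 0 1 \<subseteq> ball 0 1"
    and sub: "\<And>z. z \<in> ball 0 1 \<Longrightarrow> logderiv_quot f z = 1 + arsinh (w z)"
    unfolding subordinate_def by blast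
  have "z * deriv f z = f z * (1 + arsinh (w z))" if z: "norm z < 1" for z
  proof (cases "z = 0")
    case True
    then show ?thesis by (simp add: \<open>f 0 = 0\<close>)
  next
    case False
    have "f z \<noteq> f 0" using inj z False by (auto simp: inj_on_def)
    moreover have "z * deriv f z / f z = 1 + arsinh (w z)"
      using sub[of z] z False by (simp add: logderiv_quot_def)
    ultimately show ?thesis using \<open>f 0 = 0\<close> by (simp add: field_simps)
  qed
  moreover have "norm (w z) < 1" if "norm z < 1" for z using w_disc that by (auto simp: image_subset_iff)
  ultimately show ?thesis using that w by blast
qed

lemma hankel_real_bound:
  fixes x y z :: real
  assumes "0 \<le> x" "x \<le> 1" "0 \<le> y" "y \<le> 1 - x^2" "z \<le> 1 - x^2 - y^2 / (1 + x)"
  shows "5/36 * x^4 + x * z / 3 + y^2 / 4 \<le> 1/4"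
proof -
  have "1 + x > 0" using assms by simp
  have "y^2 \<le> (1 - x^2)^2" using assms by (intro power_mono) auto
  have "36 * (1 + x) * (5/36 * x^4 + x * (1 - x^2 - y^2 / (1 + x)) / 3 + y^2 / 4)
      = 5 * x^4 * (1 + x) + 12 * x * (1 - x^2) * (1 + x) + 3 * y^2 * (3 - x)"
    using \<open>1 + x > 0\<close> by (simp add: field_simps)
  also have "\<dots> \<le> 5 * x^4 * (1 + x) + 12 * x * (1 - x^2) * (1 + x) + 3 * (1 - x^2)^2 * (3 - x)"
    using \<open>y^2 \<le> (1 - x^2)^2\<close> assms by (intro add_left_mono mult_right_mono mult_left_mono) auto
  also have "\<dots> = 36 * (1 + x) * (1/4) - 2 * (1 + x) * x^2 * (3 - x^2)"
    by (simp add: algebra_simps power2_eq_square power4_eq_xxxx)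
  also have "\<dots> \<le> 36 * (1 + x) * (1/4)"
  proof -
    have "x^2 \<le> 1" using assms by (simp add: power_le_one)
    then have "0 \<le> 2 * (1 + x) * x^2 * (3 - x^2)" using assms by simp
    then show ?thesis by linarith
  qed
  finally have "5/36 * x^4 + x * (1 - x^2 - y^2 / (1 + x)) / 3 + y^2 / 4 \<le> 1/4"
    using \<open>1 + x > 0\<close> by simp
  moreover have "x * z / 3 \<le> x * (1 - x^2 - y^2 / (1 + x)) / 3"
    using assms by (intro divide_right_mono mult_left_mono) auto
  ultimately show ?thesis by linarith
qed

lemma hankel_schwarz_coeffs_bound:
  fixes c1 c2 c3 :: complex
  assumes "norm c1 \<le> 1" "norm c2 \<le> 1 - (norm c1)^2"
    "norm c3 \<le> 1 - (norm c1)^2 - (norm c2)^2 / (1 + norm c1)"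
  shows "norm (c1 * (c1^3 / 9 + c1 * c2 / 2 + c3 / 3) - ((c1^2 + c2) / 2)^2) \<le> 1/4"
proof -
  have "c1 * (c1^3 / 9 + c1 * c2 / 2 + c3 / 3) - ((c1^2 + c2) / 2)^2
      = c1 * c3 / 3 - (5/36 * c1^4 + c2^2 / 4)"
    by (simp add: field_simps power2_eq_square power4_eq_xxxx power3_eq_cube)
  also have "norm \<dots> \<le> norm c1 * norm c3 / 3 + (5/36 * (norm c1)^4 + (norm c2)^2 / 4)"
    using norm_triangle_ineq4[of "c1 * c3 / 3" "5/36 * c1^4 + c2^2 / 4"]
      norm_triangle_ineq[of "5/36 * c1^4" "c2^2 / 4"]
    by (simp add: norm_mult norm_divide norm_power)
  also have "\<dots> \<le> 1/4"
    using hankel_real_bound[of "norm c1" "norm c2" "norm c3"] assms by simp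
  finally show ?thesis .
qed

lemma S_rho_hankel_bound:
  assumes "f \<in> S_rho"
  shows "cmod (coeff f 2 * coeff f 4 - (coeff f 3)^2) \<le> 1/4"
proof -
  have f: "f holomorphic_on ball 0 1" "f 0 = 0" "deriv f 0 = 1"
    using assms by (auto simp: S_rho_def)
  obtain w where w: "w holomorphic_on ball 0 1" "w 0 = 0"
    and w_disc: "\<And>z. norm z < 1 \<Longrightarrow> norm (w z) < 1"
    and eq: "\<And>z. norm z < 1 \<Longrightarrow> z * deriv f z = f z * (1 + arsinh (w z))"
    using S_rho_schwarz_function[OF assms] by blast
  have coeffs: "coeff f 2 = coeff w 1" "coeff f 3 = ((coeff w 1)^2 + coeff w 2) / 2"
    "coeff f 4 = (coeff w 1)^3 / 9 + coeff w 1 * coeff w 2 / 2 + coeff w 3 / 3"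
    using coeffs_of_logderiv_eq_arsinh[OF f w(1) w_disc w(2) eq] by simp_all
  show ?thesis unfolding coeffs
    by (rule hankel_schwarz_coeffs_bound; rule schwarz_function_coeff_bounds[OF w w_disc])
qed

text \<open>Noshiro--Warschawski: along the segment from \<open>a\<close> to \<open>b\<close> the function
  \<open>t \<mapsto> Re (cnj (b - a) \<cdot> g (a + t (b - a)))\<close> has derivative \<open>\<bar>b - a\<bar>\<^sup>2 Re g' > 0\<close>.\<close>
lemma inj_on_if_Re_deriv_pos:
  fixes g g' :: "complex \<Rightarrow> complex"
  assumes "convex S"
    and g': "\<And>s. s \<in> S \<Longrightarrow> (g has_field_derivative g' s) (at s)"
    and pos: "\<And>s. s \<in> S \<Longrightarrow> 0 < Re (g' s)"
  shows "inj_on g S"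
proof (rule inj_onI, rule ccontr)
  fix a b assume "a \<in> S" "b \<in> S" "g a = g b" "a \<noteq> b"
  define d where "d = b - a"
  define G where "G t = Re (cnj d * g (a + of_real t * d))" for t :: real
  have "G 0 < G 1"
  proof (rule DERIV_pos_imp_increasing[of 0 1 G])
    fix t :: real assume "0 \<le> t" "t \<le> 1"
    define s where "s = a + of_real t * d"
    have "s = (1 - t) *\<^sub>R a + t *\<^sub>R b" by (simp add: s_def d_def scaleR_conv_of_real algebra_simps)
    then have "s \<in> S"
      using \<open>convex S\<close> \<open>a \<in> S\<close> \<open>b \<in> S\<close> \<open>0 \<le> t\<close> \<open>t \<le> 1\<close> by (simp add: convex_alt)
    have "((\<lambda>x. cnj d * g (a + x * d)) has_field_derivative cnj d * (g' s * d)) (at (of_real t))"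
      using g'[OF \<open>s \<in> S\<close>] unfolding s_def
      by (auto intro!: derivative_eq_intros DERIV_chain2[where f=g])
    then have "((\<lambda>x. cnj d * g (a + of_real x * d)) has_vector_derivative cnj d * (g' s * d)) (at t)"
      using field_vector_diff_chain_at[OF has_vector_derivative_of_real[OF DERIV_ident]]
      by (simp add: o_def)
    then have "(G has_field_derivative Re (cnj d * (g' s * d))) (at t)"
      unfolding G_def[abs_def] by (rule has_field_derivative_Re)
    moreover have "Re (cnj d * (g' s * d)) = (norm d)^2 * Re (g' s)"
      by (simp add: cmod_power2 algebra_simps) (simp add: power2_eq_square algebra_simps)
    moreover have "0 < (norm d)^2 * Re (g' s)"
      using pos[OF \<open>s \<in> S\<close>] \<open>a \<noteq> b\<close> by (simp add: d_def)
    ultimately show "\<exists>y. (G has_real_derivative y) (at t) \<and> 0 < y" by auto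
  qed simp
  moreover have "G 0 = G 1" using \<open>g a = g b\<close> by (simp add: G_def d_def)
  ultimately show False by simp
qed

definition arsinh_div :: "complex \<Rightarrow> complex" where
  "arsinh_div u = (if u = 0 then deriv arsinh 0 else arsinh u / u)"

lemma mult_arsinh_div: "u * arsinh_div u = arsinh u"
  by (simp add: arsinh_div_def)

lemma holomorphic_on_arsinh_div: "arsinh_div holomorphic_on ball 0 1"
  by (rule pole_theorem_open_0[OF holomorphic_on_arsinh_unit_disc open_ball, where a = 0])
    (auto simp: arsinh_div_def)

text \<open>\<open>\<Phi> u = \<integral>\<^sub>0\<^sup>u arsinh s / (2 s) ds\<close>, so that \<open>\<Phi> (z\<^sup>2) = \<integral>\<^sub>0\<^sup>z arsinh (t\<^sup>2) / t dt\<close>.\<close>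
definition arsinh_half_integral :: "complex \<Rightarrow> complex" where
  "arsinh_half_integral = (SOME \<Phi>. \<Phi> 0 = 0 \<and>
     (\<forall>u\<in>ball 0 1. (\<Phi> has_field_derivative arsinh_div u / 2) (at u)))"

lemma arsinh_half_integral_spec:
  "arsinh_half_integral 0 = 0 \<and>
     (\<forall>u\<in>ball 0 1. (arsinh_half_integral has_field_derivative arsinh_div u / 2) (at u))"
proof -
  have "(\<lambda>u. arsinh_div u / 2) holomorphic_on ball 0 1"
    by (intro holomorphic_intros holomorphic_on_arsinh_div) auto
  then obtain \<Phi> where \<Phi>: "\<And>u. u \<in> ball 0 1 \<Longrightarrow>
      (\<Phi> has_field_derivative arsinh_div u / 2) (at u within ball 0 1)"
    using holomorphic_convex_primitive'[OF convex_ball open_ball] by blast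
  have "((\<lambda>u. \<Phi> u - \<Phi> 0) has_field_derivative arsinh_div u / 2) (at u)" if "u \<in> ball 0 1" for u
    using \<Phi>[OF that] that by (auto simp: at_within_open[of _ "ball 0 1"] intro!: derivative_eq_intros)
  then have "\<exists>\<Phi>. \<Phi> 0 = 0 \<and> (\<forall>u\<in>ball 0 1. (\<Phi> has_field_derivative arsinh_div u / 2) (at u))"
    by (intro exI[of _ "\<lambda>u. \<Phi> u - \<Phi> 0"]) auto
  then show ?thesis unfolding arsinh_half_integral_def by (rule someI_ex)
qed

lemma arsinh_half_integral_0 [simp]: "arsinh_half_integral 0 = 0"
  using arsinh_half_integral_spec by blast

lemma arsinh_half_integral_has_field_derivative:
  "norm u < 1 \<Longrightarrow> (arsinh_half_integral has_field_derivative arsinh_div u / 2) (at u)"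
  using arsinh_half_integral_spec by simp

definition S_rho_extremal :: "complex \<Rightarrow> complex" where
  "S_rho_extremal z = z * exp (arsinh_half_integral (z^2))"

lemma S_rho_extremal_has_field_derivative:
  assumes "norm z < 1"
  shows "(S_rho_extremal has_field_derivative
           exp (arsinh_half_integral (z^2)) * (1 + arsinh (z^2))) (at z)"
proof -
  define E where "E = exp (arsinh_half_integral (z^2))"
  have "norm (z^2) < 1" using assms by (simp add: norm_power power_less_one_iff)
  have "((\<lambda>x. arsinh_half_integral (x^2)) has_field_derivative arsinh_div (z^2) / 2 * (2 * z))
      (at z)"
    using DERIV_chain2[OF arsinh_half_integral_has_field_derivative[OF \<open>norm (z^2) < 1\<close>]
        DERIV_power[OF DERIV_ident, of 2 z]]
    by simp
  then have "(S_rho_extremal has_field_derivative E + z * (E * (arsinh_div (z^2) / 2 * (2 * z))))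
      (at z)"
    unfolding S_rho_extremal_def[abs_def] E_def by (auto intro!: derivative_eq_intros)
  moreover have "E + z * (E * (arsinh_div (z^2) / 2 * (2 * z))) = E * (1 + arsinh (z^2))"
    using mult_arsinh_div[of "z^2"] by (simp add: algebra_simps power2_eq_square)
  ultimately show ?thesis by (simp add: E_def)
qed

text \<open>On the left half-plane, \<open>s \<mapsto> log (S_rho_extremal (exp s))\<close> has derivative
  \<open>1 + arsinh (exp (2 s))\<close>, whose real part is positive.\<close>
lemma inj_on_S_rho_extremal_log:
  "inj_on (\<lambda>s. s + arsinh_half_integral (exp (2 * s))) {s. Re s < 0}"
proof (rule inj_on_if_Re_deriv_pos[OF convex_halfspace_Re_lt])
  fix s :: complex assume "s \<in> {s. Re s < 0}"
  then have "norm (exp (2 * s)) < 1" by simp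
  then show "0 < Re (1 + arsinh (exp (2 * s)))" by (rule Re_one_plus_arsinh_pos)
  have "((\<lambda>x. exp (2 * x)) has_field_derivative exp (2 * s) * 2) (at s)"
    by (auto intro!: derivative_eq_intros)
  from DERIV_chain2[OF arsinh_half_integral_has_field_derivative[OF \<open>norm (exp (2 * s)) < 1\<close>] this]
  have "((\<lambda>s. arsinh_half_integral (exp (2 * s))) has_field_derivative
          arsinh_div (exp (2 * s)) / 2 * (exp (2 * s) * 2)) (at s)" .
  then show "((\<lambda>s. s + arsinh_half_integral (exp (2 * s))) has_field_derivative
          1 + arsinh (exp (2 * s))) (at s)"
    using mult_arsinh_div[of "exp (2 * s)"]
    by (auto intro!: derivative_eq_intros simp: algebra_simps)
qed

lemma S_rho_extremal_exp:
  "S_rho_extremal (exp s) = exp (s + arsinh_half_integral (exp (2 * s)))"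
  by (simp only: S_rho_extremal_def exp_add exp_double)

lemma inj_on_S_rho_extremal: "inj_on S_rho_extremal (ball 0 1)"
proof (rule inj_onI)
  fix z1 z2 :: complex
  assume z: "z1 \<in> ball 0 1" "z2 \<in> ball 0 1" and eq: "S_rho_extremal z1 = S_rho_extremal z2"
  have zero_iff: "S_rho_extremal z = 0 \<longleftrightarrow> z = 0" for z by (simp add: S_rho_extremal_def)
  show "z1 = z2"
  proof (cases "z1 = 0 \<or> z2 = 0")
    case True
    then show ?thesis using eq zero_iff by metis
  next
    case False
    define L where "L s = s + arsinh_half_integral (exp (2 * s))" for s
    define s1 where "s1 = Ln z1"
    define s2 where "s2 = Ln z2"
    have "exp s1 = z1" "exp s2 = z2" using False by (simp_all add: s1_def s2_def)
    have "Re s1 < 0" "Re s2 < 0" using False z by (simp_all add: s1_def s2_def ln_less_zero_iff)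
    have "exp (L s1) = exp (L s2)"
      using eq unfolding L_def S_rho_extremal_exp[symmetric] \<open>exp s1 = z1\<close> \<open>exp s2 = z2\<close> .
    then obtain n :: int where n: "L s1 = L s2 + of_int (2 * n) * pi * \<i>" by (auto simp: exp_eq)
    define s3 where "s3 = s2 + of_int (2 * n) * pi * \<i>"
    have "exp (2 * s3) = exp (2 * s2)"
      unfolding exp_eq by (rule exI[of _ "2 * n"]) (simp add: s3_def algebra_simps)
    then have "L s1 = L s3" using n by (simp add: L_def s3_def)
    moreover have "Re s3 < 0" using \<open>Re s2 < 0\<close> by (simp add: s3_def)
    ultimately have "s1 = s3"
      using inj_on_S_rho_extremal_log \<open>Re s1 < 0\<close> by (auto simp: L_def inj_on_def)
    moreover have "exp s3 = exp s2" unfolding exp_eq by (rule exI[of _ n]) (simp add: s3_def)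
    ultimately show ?thesis using \<open>exp s1 = z1\<close> \<open>exp s2 = z2\<close> by simp
  qed
qed

lemma S_rho_extremal_logderiv:
  assumes "norm z < 1"
  shows "z * deriv S_rho_extremal z = S_rho_extremal z * (1 + arsinh (z^2))"
  using DERIV_imp_deriv[OF S_rho_extremal_has_field_derivative[OF assms]]
  by (simp add: S_rho_extremal_def)

lemma S_rho_extremal_normalized: "S_rho_extremal 0 = 0" "deriv S_rho_extremal 0 = 1"
  using DERIV_imp_deriv[OF S_rho_extremal_has_field_derivative[of 0]]
  by (simp_all add: S_rho_extremal_def)

lemma holomorphic_on_S_rho_extremal: "S_rho_extremal holomorphic_on ball 0 1"
  unfolding holomorphic_on_open[OF open_ball] using S_rho_extremal_has_field_derivative by fastforce

lemma S_rho_extremal_in_S_rho: "S_rho_extremal \<in> S_rho"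
proof -
  have "logderiv_quot S_rho_extremal z = 1 + arsinh (z^2)" if "z \<in> ball 0 1" for z
    using S_rho_extremal_logderiv[of z] that
    by (auto simp: logderiv_quot_def S_rho_extremal_def)
  then have "subordinate (logderiv_quot S_rho_extremal) (\<lambda>z. 1 + arsinh z)"
    unfolding subordinate_def
    by (intro exI[of _ "\<lambda>z. z^2"]) (auto intro!: holomorphic_intros simp: norm_power power_less_one_iff)
  then show ?thesis
    using holomorphic_on_S_rho_extremal inj_on_S_rho_extremal S_rho_extremal_normalized
    by (simp add: S_rho_def)
qed

lemma S_rho_extremal_hankel:
  "cmod (coeff S_rho_extremal 2 * coeff S_rho_extremal 4 - (coeff S_rho_extremal 3)^2) = 1/4"
proof -
  have w: "(\<lambda>z::complex. z^2) holomorphic_on ball 0 1" by (intro holomorphic_intros)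
  have w_disc: "norm (z^2) < 1" if "norm z < 1" for z :: complex
    using that by (simp add: norm_power power_less_one_iff)
  have "(\<lambda>z::complex. z^2) has_fps_expansion fps_X ^ 2" by (rule has_fps_expansion_fps_X_power)
  then have "coeff (\<lambda>z::complex. z^2) 1 = 0" "coeff (\<lambda>z::complex. z^2) 2 = 1"
    "coeff (\<lambda>z::complex. z^2) 3 = 0"
    by (simp_all add: coeff_eq_fps_nth)
  moreover note coeffs_of_logderiv_eq_arsinh[OF holomorphic_on_S_rho_extremal
      S_rho_extremal_normalized w w_disc _ S_rho_extremal_logderiv]
  ultimately have "coeff S_rho_extremal 2 = 0" "coeff S_rho_extremal 3 = 1/2"
    "coeff S_rho_extremal 4 = 0"
    by simp_all
  then show ?thesis by (simp only:) (simp add: power2_eq_square)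
qed

theorem theorem2p2:
  shows "(\<forall>f\<in>S_rho. cmod (coeff f 2 * coeff f 4 - (coeff f 3)^2) \<le> 1/4)
       \<and> (\<exists>f\<in>S_rho. cmod (coeff f 2 * coeff f 4 - (coeff f 3)^2) = 1/4)"
  using S_rho_hankel_bound S_rho_extremal_in_S_rho S_rho_extremal_hankel by blast

end
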